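(* Let $A\in P(n)$ and let $N$ be a unitarily invariant norm on $M_n$. Then $I(N,A)=0$ if and only if $A_{ii}=0$ for some $i\in\{1,\dots,n\}$.
   Context: $M_n$ is the set of complex $n\times n$ matrices, $P(n)$ the positive semidefinite ones, $\circ$ the Hadamard product. For a unitarily invariant norm $N$, $I(N,A)=\min\{N(A\circ B): B\in P(n),\ N(B)=1\}$. *)

theory Defs
  imports "HOL-Analysis.Analysis"
begin

definition cadj :: "complex^'n^'n \<Rightarrow> complex^'n^'n" where
  "cadj A = (\<chi> i j. cnj (A $ j $ i))"

definition unitary_mat :: "complex^'n^'n \<Rightarrow> bool" where
  "unitary_mat U \<longleftrightarrow> cadj U ** U = mat 1 \<and> U ** cadj U = mat 1"

definition psd :: "complex^'n^'n \<Rightarrow> bool" where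
  "psd A \<longleftrightarrow> cadj A = A \<and>
     (\<forall>x::complex^'n. Im (\<Sum>i\<in>UNIV. cnj (x $ i) * (A *v x) $ i) = 0
                     \<and> Re (\<Sum>i\<in>UNIV. cnj (x $ i) * (A *v x) $ i) \<ge> 0)"

definition hadamard :: "complex^'n^'n \<Rightarrow> complex^'n^'n \<Rightarrow> complex^'n^'n" where
  "hadamard A B = (\<chi> i j. A $ i $ j * B $ i $ j)"

definition cscale :: "complex \<Rightarrow> complex^'n^'n \<Rightarrow> complex^'n^'n" where
  "cscale c A = (\<chi> i j. c * A $ i $ j)"

definition matrix_norm :: "(complex^'n^'n \<Rightarrow> real) \<Rightarrow> bool" where
  "matrix_norm N \<longleftrightarrow>
     (\<forall>A. 0 \<le> N A) \<and> (\<forall>A. N A = 0 \<longleftrightarrow> A = 0) \<and>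
     (\<forall>c A. N (cscale c A) = cmod c * N A) \<and>
     (\<forall>A B. N (A + B) \<le> N A + N B)"

definition ui_norm :: "(complex^'n^'n \<Rightarrow> real) \<Rightarrow> bool" where
  "ui_norm N \<longleftrightarrow> matrix_norm N \<and>
     (\<forall>U V A. unitary_mat U \<and> unitary_mat V \<longrightarrow> N (U ** A ** V) = N A)"

text \<open>I(N,A) = min { N(A o B) : B psd, N(B) = 1 }; the minimum is attained, so it equals the infimum.\<close>
definition I_val :: "(complex^'n^'n \<Rightarrow> real) \<Rightarrow> complex^'n^'n \<Rightarrow> real" where
  "I_val N A = Inf {N (hadamard A B) | B. psd B \<and> N B = 1}"

end

theory Submission
  imports Defs
begin

text \<open>
  I(N,A) is the minimum of the continuous function B \<mapsto> N(A \<circ> B) over the compact set of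
  positive semidefinite B with N(B) = 1. If A has a zero diagonal entry A_ii, the normalised
  matrix unit E_ii is admissible and A \<circ> E_ii = 0. Conversely, if the minimum is 0, it is
  attained at some admissible B with A \<circ> B = 0; then A_ii B_ii = 0 for all i, so if no A_ii
  vanishes, B has zero diagonal, and a positive semidefinite matrix with zero diagonal is 0,
  contradicting N(B) = 1.
\<close>

lemma matrix_norm_nonneg: "matrix_norm N \<Longrightarrow> 0 \<le> N X"
  and matrix_norm_eq_0_iff: "matrix_norm N \<Longrightarrow> N X = 0 \<longleftrightarrow> X = 0"
  and matrix_norm_cscale: "matrix_norm N \<Longrightarrow> N (cscale c X) = cmod c * N X"
  and matrix_norm_triangle: "matrix_norm N \<Longrightarrow> N (X + Y) \<le> N X + N Y"
  unfolding matrix_norm_def by blast+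

lemma matrix_norm_pos: "matrix_norm N \<Longrightarrow> X \<noteq> 0 \<Longrightarrow> 0 < N X"
  using matrix_norm_nonneg matrix_norm_eq_0_iff by (metis order_less_le)

lemma matrix_norm_scaleR:
  assumes "matrix_norm N"
  shows "N (c *\<^sub>R X) = \<bar>c\<bar> * N X"
proof -
  have "c *\<^sub>R X = cscale (of_real c) X"
    unfolding cscale_def vec_eq_iff by (auto simp: complex_eq_iff)
  then show ?thesis using matrix_norm_cscale[OF assms] by simp
qed

lemma matrix_norm_convex:
  assumes "matrix_norm N"
  shows "convex_on UNIV N"
proof (rule convex_onI)
  fix t :: real and X Y assume "0 < t" "t < 1"
  have "N ((1 - t) *\<^sub>R X + t *\<^sub>R Y) \<le> N ((1 - t) *\<^sub>R X) + N (t *\<^sub>R Y)"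
    by (rule matrix_norm_triangle[OF assms])
  also have "\<dots> = (1 - t) * N X + t * N Y"
    using matrix_norm_scaleR[OF assms] \<open>0 < t\<close> \<open>t < 1\<close> by simp
  finally show "N ((1 - t) *\<^sub>R X + t *\<^sub>R Y) \<le> (1 - t) * N X + t * N Y" .
qed simp

lemma matrix_norm_continuous: "matrix_norm N \<Longrightarrow> continuous_on UNIV N"
  by (simp add: convex_on_continuous matrix_norm_convex)

lemma matrix_norm_lower_bound:
  assumes "matrix_norm N"
  obtains m where "0 < m" "\<And>X. m * norm X \<le> N X"
proof -
  have "sphere (0::complex^'n^'n) 1 \<noteq> {}" by simp
  then obtain X0 where X0: "X0 \<in> sphere 0 1" "\<And>Y. Y \<in> sphere 0 1 \<Longrightarrow> N X0 \<le> N Y"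
    using continuous_attains_inf[OF compact_sphere _
        continuous_on_subset[OF matrix_norm_continuous[OF assms]]] by blast
  have "N X0 * norm X \<le> N X" for X
  proof (cases "X = 0")
    case False
    have "N X0 \<le> N ((1 / norm X) *\<^sub>R X)" using False by (intro X0(2)) simp
    also have "\<dots> = N X / norm X" using matrix_norm_scaleR[OF assms] by simp
    finally show ?thesis using False by (simp add: field_simps)
  qed (simp add: matrix_norm_nonneg[OF assms])
  moreover have "0 < N X0" using X0(1) by (intro matrix_norm_pos[OF assms]) auto
  ultimately show thesis using that by blast
qed

lemma closed_psd: "closed {B::complex^'n^'n. psd B}"
  unfolding psd_def cadj_def matrix_vector_mult_def
  by (intro closed_Collect_conj closed_Collect_all closed_Collect_eq closed_Collect_le
      continuous_intros)

lemma compact_normalized_psd: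
  assumes "matrix_norm N"
  shows "compact {B. psd B \<and> N B = 1}"
proof -
  obtain m where m: "0 < m" "\<And>X. m * norm X \<le> N X"
    using matrix_norm_lower_bound[OF assms] by blast
  have "closed ({B. psd B} \<inter> {B. N B = 1})"
    using closed_psd closed_Collect_eq[OF matrix_norm_continuous[OF assms] continuous_on_const]
    by blast
  moreover have "bounded {B. psd B \<and> N B = 1}"
    unfolding bounded_iff
  proof (intro exI ballI)
    fix B assume "B \<in> {B. psd B \<and> N B = 1}"
    then have "m * norm B \<le> 1" using m(2)[of B] by simp
    then show "norm B \<le> 1 / m" using m(1) by (simp add: field_simps)
  qed
  ultimately show ?thesis by (simp add: compact_eq_bounded_closed Int_def)
qed

lemma psd_offdiag_eq_0:
  fixes B :: "complex^'n^'n"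
  assumes "psd B" and "B $ i $ i = 0" and "B $ j $ j = 0"
  shows "B $ i $ j = 0"
proof (cases "i = j")
  case False
  define t where "t = - cnj (B $ i $ j)"
  define x :: "complex^'n" where "x = (\<chi> k. if k = i then 1 else if k = j then t else 0)"
  have Bx: "(B *v x) $ k = B $ k $ i + B $ k $ j * t" for k
  proof -
    have "(B *v x) $ k = (\<Sum>l\<in>UNIV. B $ k $ l * x $ l)"
      by (simp add: matrix_vector_mult_def)
    also have "\<dots> = (\<Sum>l\<in>{i,j}. B $ k $ l * x $ l)"
      by (rule sum.mono_neutral_right) (auto simp: x_def)
    finally show ?thesis using False by (simp add: x_def)
  qed
  have "cadj B $ j $ i = B $ j $ i" using assms(1) by (simp add: psd_def)
  then have hermitian: "B $ j $ i = cnj (B $ i $ j)" by (simp add: cadj_def)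
  have "(\<Sum>k\<in>UNIV. cnj (x $ k) * (B *v x) $ k) = (\<Sum>k\<in>{i,j}. cnj (x $ k) * (B *v x) $ k)"
    by (rule sum.mono_neutral_right) (auto simp: x_def)
  also have "\<dots> = B $ i $ j * t + cnj t * B $ j $ i"
    using False assms(2,3) by (simp add: Bx) (simp add: x_def)
  also have "\<dots> = - 2 * of_real ((cmod (B $ i $ j))\<^sup>2)"
    unfolding t_def hermitian complex_norm_square by (simp add: algebra_simps)
  finally have "(\<Sum>k\<in>UNIV. cnj (x $ k) * (B *v x) $ k) = - 2 * of_real ((cmod (B $ i $ j))\<^sup>2)" .
  moreover have "Re (\<Sum>k\<in>UNIV. cnj (x $ k) * (B *v x) $ k) \<ge> 0"
    using assms(1) unfolding psd_def by blast
  ultimately have "(cmod (B $ i $ j))\<^sup>2 \<le> 0" by simp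
  then show ?thesis by simp
qed (use assms in simp)

lemma psd_eq_0_if_diag_eq_0:
  fixes B :: "complex^'n^'n"
  assumes "psd B" and "\<And>i. B $ i $ i = 0"
  shows "B = 0"
  by (simp add: vec_eq_iff psd_offdiag_eq_0[OF assms(1) assms(2) assms(2)])

definition diag_unit :: "'n \<Rightarrow> complex^'n^'n" where
  "diag_unit i = (\<chi> k l. if k = i \<and> l = i then 1 else 0)"

lemma diag_unit_nonzero: "diag_unit i \<noteq> 0"
  by (auto simp: diag_unit_def vec_eq_iff)

lemma cscale_diag_unit_mult_vec:
  "(cscale c (diag_unit i) *v x) $ k = (if k = i then c * x $ i else 0)"
  unfolding matrix_vector_mult_def cscale_def diag_unit_def
  by (auto simp: if_distrib[of "\<lambda>z. _ * z"] if_distrib[of "\<lambda>z. z * _"] cong: if_cong)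

lemma psd_cscale_diag_unit:
  assumes "0 \<le> c"
  shows "psd (cscale (of_real c) (diag_unit i))"
proof -
  let ?E = "cscale (of_real c) (diag_unit i)"
  have "(\<Sum>k\<in>UNIV. cnj (x $ k) * (?E *v x) $ k) = of_real (c * (cmod (x $ i))\<^sup>2)" for x
  proof -
    have "(\<Sum>k\<in>UNIV. cnj (x $ k) * (?E *v x) $ k) = of_real c * (x $ i * cnj (x $ i))"
      by (auto simp: cscale_diag_unit_mult_vec if_distrib[of "\<lambda>z. _ * z"] cong: if_cong)
    then show ?thesis by (simp flip: complex_norm_square)
  qed
  moreover have "cadj ?E = ?E" by (auto simp: cadj_def cscale_def diag_unit_def vec_eq_iff)
  ultimately show ?thesis unfolding psd_def using assms by simp
qed

lemma hadamard_diag_unit_eq_0: "A $ i $ i = 0 \<Longrightarrow> hadamard A (cscale c (diag_unit i)) = 0"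
  by (auto simp: hadamard_def cscale_def diag_unit_def vec_eq_iff)

definition normalized_diag_unit :: "(complex^'n^'n \<Rightarrow> real) \<Rightarrow> 'n \<Rightarrow> complex^'n^'n" where
  "normalized_diag_unit N i = cscale (of_real (1 / N (diag_unit i))) (diag_unit i)"

lemma
  assumes "matrix_norm N"
  shows psd_normalized_diag_unit: "psd (normalized_diag_unit N i)"
    and matrix_norm_normalized_diag_unit: "N (normalized_diag_unit N i) = 1"
proof -
  have pos: "0 < N (diag_unit i)" by (rule matrix_norm_pos[OF assms diag_unit_nonzero])
  then show "psd (normalized_diag_unit N i)"
    unfolding normalized_diag_unit_def by (intro psd_cscale_diag_unit) simp
  show "N (normalized_diag_unit N i) = 1"
    unfolding normalized_diag_unit_def
    using pos by (simp add: matrix_norm_cscale[OF assms] norm_divide)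
qed

lemma I_val_attained:
  assumes "matrix_norm N"
  obtains B where "psd B" "N B = 1" "I_val N A = N (hadamard A B)"
proof -
  let ?K = "{B. psd B \<and> N B = 1}"
  have "?K \<noteq> {}"
    using psd_normalized_diag_unit[OF assms] matrix_norm_normalized_diag_unit[OF assms] by blast
  moreover have "continuous_on ?K (\<lambda>B. N (hadamard A B))"
  proof -
    have "continuous_on ?K (\<lambda>B. hadamard A B)"
      unfolding hadamard_def by (intro continuous_intros)
    then show ?thesis
      by (rule continuous_on_compose2[OF matrix_norm_continuous[OF assms] _ subset_UNIV])
  qed
  ultimately obtain B
    where "B \<in> ?K" and min: "\<forall>B'\<in>?K. N (hadamard A B) \<le> N (hadamard A B')"
    using continuous_attains_inf[OF compact_normalized_psd[OF assms]] by blast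
  then have B: "psd B" "N B = 1" by auto
  have "I_val N A = N (hadamard A B)"
    unfolding I_val_def
  proof (rule cInf_eq_minimum)
    show "N (hadamard A B) \<in> {N (hadamard A B) | B. psd B \<and> N B = 1}" using B by blast
    fix x assume "x \<in> {N (hadamard A B) | B. psd B \<and> N B = 1}"
    then show "N (hadamard A B) \<le> x" using min by auto
  qed
  with B show thesis by (rule that)
qed

lemma I_val_eq_0_if_diag_eq_0:
  assumes "matrix_norm N" and "A $ i $ i = 0"
  shows "I_val N A = 0"
proof -
  have "N (hadamard A (normalized_diag_unit N i)) = 0"
    using assms by (simp add: normalized_diag_unit_def hadamard_diag_unit_eq_0 matrix_norm_eq_0_iff)
  then have "0 \<in> {N (hadamard A B) | B. psd B \<and> N B = 1}"
    using psd_normalized_diag_unit[OF assms(1)] matrix_norm_normalized_diag_unit[OF assms(1)]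
    by force
  then show ?thesis
    unfolding I_val_def by (rule cInf_eq_minimum) (auto simp: matrix_norm_nonneg[OF assms(1)])
qed

theorem mainTheorem16:
  fixes A :: "complex^'n^'n" and N :: "complex^'n^'n \<Rightarrow> real"
  assumes "psd A" and "ui_norm N"
  shows "I_val N A = 0 \<longleftrightarrow> (\<exists>i. A $ i $ i = 0)"
proof
  have N: "matrix_norm N" using assms(2) unfolding ui_norm_def by blast
  show "\<exists>i. A $ i $ i = 0" if I_zero: "I_val N A = 0"
  proof (rule ccontr)
    assume nonzero_diag: "\<nexists>i. A $ i $ i = 0"
    obtain B where B: "psd B" "N B = 1" "I_val N A = N (hadamard A B)"
      using I_val_attained[OF N] by blast
    then have "hadamard A B = 0" using I_zero matrix_norm_eq_0_iff[OF N] by simp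
    then have "hadamard A B $ i $ i = 0" for i by simp
    then have "A $ i $ i * B $ i $ i = 0" for i by (simp add: hadamard_def)
    then have "B = 0" using nonzero_diag by (intro psd_eq_0_if_diag_eq_0[OF B(1)]) auto
    then show False using B(2) matrix_norm_eq_0_iff[OF N, of 0] by simp
  qed
  show "I_val N A = 0" if "\<exists>i. A $ i $ i = 0"
    using that I_val_eq_0_if_diag_eq_0[OF N] by blast
qed

end
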